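(* Let $d\ge 2$ and $n\ge 1$ be integers and let $M_x=\{|\phi_x^a\rangle: a=1,\ldots,d\}$, $x=1,\ldots,n$, be a set of mutually unbiased orthonormal bases of $\mathbb{C}^d$. Define the steering functional $F=\{F_x^a\}$ by $F_x^a=|\phi_x^a\rangle\langle\phi_x^a|$ for $x=1,\ldots,n$, $a=1,\ldots,d$. Then $$V(F)\ \ge\ \frac{n\sqrt{d}}{n+1+\sqrt{d}}.$$
   Context: Two orthonormal bases $\{|\phi_1^a\rangle\}_{a=1}^d$, $\{|\phi_2^b\rangle\}_{b=1}^d$ of $\mathbb{C}^d$ are mutually unbiased if $|\langle\phi_1^a|\phi_2^b\rangle|=1/\sqrt{d}$ for all $a,b$; a set of bases is a set of MUBs if every two distinct bases in it are mutually unbiased. An $(n,m,d)$-assemblage is a family $\sigma=\{\sigma_x^a: x=1,\ldots,n,\ a=1,\ldots,m\}$ of positive semidefinite operators on $\mathbb{C}^d$ such that $\sum_a\sigma_x^a$ does not depend on $x$ and has trace $1$; $\mathcal{Q}$ is the set of all such assemblages. An assemblage has a local hidden state (LHS) model if there exist a finite index set $\Lambda$, weights $q_\lambda\ge0$ with $\sum_\lambda q_\lambda=1$, density matrices $\sigma_\lambda$ on $\mathbb{C}^d$, and probability distributions $\{p_\lambda(a|x)\}_a$ for each $x,\lambda$, such that $\sigma_x^a=\sum_{\lambda}q_\lambda p_\lambda(a|x)\sigma_\lambda$ for all $x,a$; $\mathcal{L}$ is the set of such assemblages. For a steering functional $F=\{F_x^a\}$ (a family of $d\times d$ matrices), $\langle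 F,\sigma\rangle=\mathrm{Tr}\big(\sum_{x,a}F_x^a\sigma_x^a\big)$, $S_{LHS}(F)=\sup\{|\langle F,\sigma\rangle|:\sigma\in\mathcal{L}\}$, $S_Q(F)=\sup\{|\langle F,\sigma\rangle|:\sigma\in\mathcal{Q}\}$, and the quantum violation is $V(F)=S_Q(F)/S_{LHS}(F)$. *)

theory Defs
  imports "HOL-Analysis.Analysis"
begin

text \<open>Vectors of C^d are complex^'d, d x d matrices are complex^'d^'d, with d = CARD('d).
Measurement settings x range over {1..n}; outcomes a range over a finite type 'a.\<close>

definition cinner :: "complex^'d \<Rightarrow> complex^'d \<Rightarrow> complex" where
  "cinner v w = (\<Sum>i\<in>UNIV. cnj (v $ i) * w $ i)"

definition outer :: "complex^'d \<Rightarrow> complex^'d^'d" where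
  "outer v = (\<chi> i j. v $ i * cnj (v $ j))"

definition orthonormal_basis :: "('a::finite \<Rightarrow> complex^'d) \<Rightarrow> bool" where
  "orthonormal_basis b \<longleftrightarrow> CARD('a) = CARD('d) \<and>
     (\<forall>a a'. cinner (b a) (b a') = (if a = a' then 1 else 0))"

definition mutually_unbiased :: "('a::finite \<Rightarrow> complex^'d) \<Rightarrow> ('a \<Rightarrow> complex^'d) \<Rightarrow> bool" where
  "mutually_unbiased b1 b2 \<longleftrightarrow>
     (\<forall>a b. cmod (cinner (b1 a) (b2 b)) = 1 / sqrt (real CARD('d)))"

definition MUB_set :: "nat \<Rightarrow> (nat \<Rightarrow> 'a::finite \<Rightarrow> complex^'d) \<Rightarrow> bool" where
  "MUB_set n \<phi> \<longleftrightarrow> (\<forall>x\<in>{1..n}. orthonormal_basis (\<phi> x)) \<and>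
     (\<forall>x\<in>{1..n}. \<forall>y\<in>{1..n}. x \<noteq> y \<longrightarrow> mutually_unbiased (\<phi> x) (\<phi> y))"

definition psd :: "complex^'d^'d \<Rightarrow> bool" where
  "psd A \<longleftrightarrow> (\<forall>v. Im (cinner v (A *v v)) = 0 \<and> Re (cinner v (A *v v)) \<ge> 0)"

definition density :: "complex^'d^'d \<Rightarrow> bool" where
  "density \<rho> \<longleftrightarrow> psd \<rho> \<and> trace \<rho> = 1"

definition assemblage :: "nat \<Rightarrow> (nat \<Rightarrow> 'a::finite \<Rightarrow> complex^'d^'d) \<Rightarrow> bool" where
  "assemblage n \<sigma> \<longleftrightarrow> (\<forall>x\<in>{1..n}. \<forall>a. psd (\<sigma> x a)) \<and>
     (\<forall>x\<in>{1..n}. \<forall>y\<in>{1..n}. (\<Sum>a\<in>UNIV. \<sigma> x a) = (\<Sum>a\<in>UNIV. \<sigma> y a)) \<and>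
     (\<forall>x\<in>{1..n}. trace (\<Sum>a\<in>UNIV. \<sigma> x a) = 1)"

definition has_LHS :: "nat \<Rightarrow> (nat \<Rightarrow> 'a::finite \<Rightarrow> complex^'d^'d) \<Rightarrow> bool" where
  "has_LHS n \<sigma> \<longleftrightarrow> (\<exists>(\<Lambda>::nat set) q \<rho> p. finite \<Lambda> \<and>
     (\<forall>l\<in>\<Lambda>. q l \<ge> (0::real)) \<and> sum q \<Lambda> = 1 \<and>
     (\<forall>l\<in>\<Lambda>. density (\<rho> l)) \<and>
     (\<forall>l\<in>\<Lambda>. \<forall>x\<in>{1..n}. (\<forall>a. p l x a \<ge> (0::real)) \<and> (\<Sum>a\<in>UNIV. p l x a) = 1) \<and>
     (\<forall>x\<in>{1..n}. \<forall>a. \<sigma> x a = (\<Sum>l\<in>\<Lambda>. (q l * p l x a) *\<^sub>R \<rho> l)))"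

definition pairing :: "nat \<Rightarrow> (nat \<Rightarrow> 'a::finite \<Rightarrow> complex^'d^'d) \<Rightarrow> (nat \<Rightarrow> 'a \<Rightarrow> complex^'d^'d) \<Rightarrow> complex" where
  "pairing n F \<sigma> = trace (\<Sum>x\<in>{1..n}. \<Sum>a\<in>UNIV. F x a ** \<sigma> x a)"

definition S_LHS :: "nat \<Rightarrow> (nat \<Rightarrow> 'a::finite \<Rightarrow> complex^'d^'d) \<Rightarrow> real" where
  "S_LHS n F = Sup {cmod (pairing n F \<sigma>) | \<sigma>. has_LHS n \<sigma>}"

definition S_Q :: "nat \<Rightarrow> (nat \<Rightarrow> 'a::finite \<Rightarrow> complex^'d^'d) \<Rightarrow> real" where
  "S_Q n F = Sup {cmod (pairing n F \<sigma>) | \<sigma>. assemblage n \<sigma>}"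

definition violation :: "nat \<Rightarrow> (nat \<Rightarrow> 'a::finite \<Rightarrow> complex^'d^'d) \<Rightarrow> real" where
  "violation n F = S_Q n F / S_LHS n F"

end

theory Submission
  imports Defs
begin

text \<open>In an LHS model the pairing \<open>\<langle>F, \<sigma>\<rangle>\<close> is an average over hidden states \<open>\<rho>\<close> of
  \<open>\<Sum>\<^sub>x \<Sum>\<^sub>a p(a|x) \<langle>\<phi>\<^sub>x\<^sup>a|\<rho>|\<phi>\<^sub>x\<^sup>a\<rangle>\<close>, which is at most \<open>\<Sum>\<^sub>x \<langle>w\<^sub>x|\<rho>|w\<^sub>x\<rangle>\<close> for a choice of one
  basis vector \<open>w\<^sub>x\<close> per basis. These \<open>n\<close> unit vectors have pairwise overlaps \<open>1/\<surd>d\<close>, so for the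
  frame operator \<open>P = \<Sum>\<^sub>x |w\<^sub>x\<rangle>\<langle>w\<^sub>x|\<close> a Gershgorin-type estimate on the Gram matrix gives
  \<open>tr (P\<rho>P) \<le> \<beta> tr (P\<rho>)\<close> with \<open>\<beta> = 1 + (n - 1)/\<surd>d\<close>; positivity of \<open>tr ((1 - P/\<beta>) \<rho> (1 - P/\<beta>))\<close>
  then yields \<open>tr (P\<rho>) \<le> \<beta> tr \<rho>\<close>. Hence \<open>S\<^sub>L\<^sub>H\<^sub>S(F) \<le> \<beta>\<close>, while the assemblage
  \<open>\<sigma>\<^sub>x\<^sup>a = |\<phi>\<^sub>x\<^sup>a\<rangle>\<langle>\<phi>\<^sub>x\<^sup>a|/d\<close> attains \<open>n\<close>, so \<open>V(F) \<ge> n/\<beta> = n\<surd>d/(\<surd>d + n - 1)\<close>.\<close>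

definition sesq :: "complex^'d^'d \<Rightarrow> complex^'d \<Rightarrow> complex^'d \<Rightarrow> complex" where
  "sesq \<rho> u w = cinner u (\<rho> *v w)"

lemma sesq_coord: "sesq \<rho> u w = (\<Sum>i\<in>UNIV. \<Sum>j\<in>UNIV. cnj (u$i) * \<rho>$i$j * w$j)"
  by (simp add: sesq_def cinner_def matrix_vector_mult_def sum_distrib_left mult.assoc)

lemma sesq_add_left: "sesq \<rho> (u1 + u2) w = sesq \<rho> u1 w + sesq \<rho> u2 w"
  and sesq_add_right: "sesq \<rho> u (w1 + w2) = sesq \<rho> u w1 + sesq \<rho> u w2"
  and sesq_diff_left: "sesq \<rho> (u1 - u2) w = sesq \<rho> u1 w - sesq \<rho> u2 w"
  and sesq_diff_right: "sesq \<rho> u (w1 - w2) = sesq \<rho> u w1 - sesq \<rho> u w2"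
  and sesq_scale_left: "sesq \<rho> (c *s u) w = cnj c * sesq \<rho> u w"
  and sesq_scale_right: "sesq \<rho> u (c *s w) = c * sesq \<rho> u w"
  and sesq_zero_left: "sesq \<rho> 0 w = 0"
  and sesq_zero_right: "sesq \<rho> u 0 = 0"
  by (simp_all add: sesq_coord sum.distrib sum_subtractf sum_distrib_left algebra_simps)

lemma sesq_sum_left: "finite X \<Longrightarrow> sesq \<rho> (\<Sum>x\<in>X. f x) w = (\<Sum>x\<in>X. sesq \<rho> (f x) w)"
  by (induction X rule: finite_induct) (simp_all add: sesq_add_left sesq_zero_left)

lemma sesq_sum_right: "finite X \<Longrightarrow> sesq \<rho> u (\<Sum>x\<in>X. f x) = (\<Sum>x\<in>X. sesq \<rho> u (f x))"
  by (induction X rule: finite_induct) (simp_all add: sesq_add_right sesq_zero_right)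

lemma sesq_matrix_add: "sesq (A + B) u w = sesq A u w + sesq B u w"
  and sesq_matrix_zero: "sesq 0 u w = 0"
  by (simp_all add: sesq_coord sum.distrib algebra_simps)

lemma sesq_matrix_scaleR: "sesq (c *\<^sub>R A) u w = of_real c * sesq A u w"
  by (simp add: sesq_coord sum_distrib_left scaleR_conv_of_real[where 'a=complex] algebra_simps)

lemma sesq_matrix_sum: "finite L \<Longrightarrow> sesq (\<Sum>l\<in>L. f l) u w = (\<Sum>l\<in>L. sesq (f l) u w)"
  by (induction L rule: finite_induct) (simp_all add: sesq_matrix_add sesq_matrix_zero)

lemma sesq_mat_1: "sesq (mat 1) u w = cinner u w"
  by (simp add: sesq_def)

lemma cinner_axis_left: "cinner (axis i 1) w = w $ i"
proof -
  have "cnj (axis i 1 $ j) * w $ j = (if j = i then w $ i else 0)" for j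
    by (simp add: axis_def)
  then show ?thesis
    unfolding cinner_def by simp
qed

lemma matrix_vector_mult_axis: "(\<rho> *v axis i 1) $ j = \<rho> $ j $ i"
proof -
  have "\<rho> $ j $ k * axis i 1 $ k = (if k = i then \<rho> $ j $ i else 0)" for k
    by (simp add: axis_def)
  then show ?thesis
    unfolding matrix_vector_mult_def by simp
qed

lemma sesq_axis_axis: "sesq \<rho> (axis i 1) (axis i 1) = \<rho> $ i $ i"
  by (simp add: sesq_def cinner_axis_left matrix_vector_mult_axis)

lemma sesq_expand_left: "(\<Sum>i\<in>UNIV. cnj (u $ i) * sesq \<rho> (axis i 1) w) = sesq \<rho> u w"
  by (simp add: sesq_def cinner_axis_left) (simp add: cinner_def)

lemma sesq_expand_right: "(\<Sum>i\<in>UNIV. w $ i * sesq \<rho> u (axis i 1)) = sesq \<rho> u w"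
  unfolding sesq_coord
  apply (simp add: axis_def if_distrib sum_distrib_left cong: if_cong)
  apply (subst sum.swap)
  by (simp add: sum_distrib_left mult_ac)

lemma trace_eq_sum_sesq_axis: "trace \<rho> = (\<Sum>i\<in>UNIV. sesq \<rho> (axis i 1) (axis i 1))"
  by (simp add: trace_def sesq_axis_axis)

lemma trace_sum: "trace (\<Sum>x\<in>X. f x) = (\<Sum>x\<in>X. trace (f x))"
  unfolding trace_def by (cases "finite X") (simp_all add: sum.swap[of _ UNIV])

lemma trace_outer_mult: "trace (outer v ** \<rho>) = sesq \<rho> v v"
  unfolding sesq_coord trace_def outer_def matrix_matrix_mult_def
  apply simp
  apply (subst sum.swap)
  by (simp add: sum_distrib_left mult_ac)

lemma cinner_commute: "cinner w v = cnj (cinner v w)"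
  by (simp add: cinner_def mult.commute)

lemma cinner_scale_right: "cinner u (c *s w) = c * cinner u w"
  by (simp add: cinner_def sum_distrib_left mult_ac)

lemma cinner_self: "cinner v v = of_real (\<Sum>i\<in>UNIV. (cmod (v $ i))\<^sup>2)"
  unfolding cinner_def of_real_sum
  by (intro sum.cong refl) (metis complex_norm_square mult.commute)

lemma outer_mult_vector: "outer v *v w = cinner v w *s v"
  by (simp add: vec_eq_iff matrix_vector_mult_def outer_def cinner_def sum_distrib_left mult_ac)

lemma sesq_outer: "sesq (outer v) w w = of_real ((cmod (cinner v w))\<^sup>2)"
  using complex_norm_square[of "cinner v w"]
  by (simp add: sesq_def outer_mult_vector cinner_scale_right cinner_commute[of w v] mult.commute)

lemma sum_outer_orthonormal_basis:
  fixes b :: "'d::finite \<Rightarrow> complex^'d"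
  assumes "orthonormal_basis b"
  shows "(\<Sum>a\<in>UNIV. outer (b a)) = mat 1"
proof -
  define U :: "complex^'d^'d" where "U = (\<chi> i a. b a $ i)"
  define U' :: "complex^'d^'d" where "U' = (\<chi> a i. cnj (b a $ i))"
  have "U' ** U = mat 1"
    using assms unfolding orthonormal_basis_def
    by (simp add: vec_eq_iff matrix_matrix_mult_def U_def U'_def mat_def cinner_def)
  then have "U ** U' = mat 1"
    using matrix_left_right_inverse by blast
  then show ?thesis
    by (simp add: vec_eq_iff matrix_matrix_mult_def U_def U'_def outer_def)
qed

lemma psd_iff_sesq: "psd \<rho> \<longleftrightarrow> (\<forall>v. Im (sesq \<rho> v v) = 0 \<and> Re (sesq \<rho> v v) \<ge> 0)"
  by (simp add: psd_def sesq_def)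

lemma psd_sesq_real: "psd \<rho> \<Longrightarrow> sesq \<rho> v v = of_real (Re (sesq \<rho> v v))"
  by (simp add: psd_iff_sesq complex_eq_iff)

lemma psd_sesq_nonneg: "psd \<rho> \<Longrightarrow> Re (sesq \<rho> v v) \<ge> 0"
  by (simp add: psd_iff_sesq)

lemma psd_scaleR: "psd A \<Longrightarrow> c \<ge> 0 \<Longrightarrow> psd (c *\<^sub>R A)"
  by (simp add: psd_iff_sesq sesq_matrix_scaleR)

lemma psd_mat_1: "psd (mat 1)"
  by (simp add: psd_iff_sesq sesq_mat_1 cinner_self sum_nonneg)

lemma psd_outer: "psd (outer v)"
  by (simp add: psd_iff_sesq sesq_outer)

lemma psd_sesq_commute:
  assumes "psd \<rho>"
  shows "sesq \<rho> w u = cnj (sesq \<rho> u w)"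
proof -
  let ?a = "sesq \<rho> u w" and ?b = "sesq \<rho> w u"
  have real: "Im (sesq \<rho> v v) = 0" for v
    using assms by (simp add: psd_iff_sesq)
  have "sesq \<rho> (u + w) (u + w) = sesq \<rho> u u + sesq \<rho> w w + ?a + ?b"
    by (simp add: sesq_add_left sesq_add_right)
  then have "Im (?a + ?b) = 0"
    using real[of "u + w"] real[of u] real[of w] by simp
  moreover have "sesq \<rho> (u + \<i> *s w) (u + \<i> *s w) = sesq \<rho> u u + sesq \<rho> w w + \<i> * ?a - \<i> * ?b"
    by (simp add: sesq_add_left sesq_add_right sesq_scale_left sesq_scale_right algebra_simps)
  then have "Re ?a - Re ?b = 0"
    using real[of "u + \<i> *s w"] real[of u] real[of w] by simp
  ultimately show ?thesis
    by (simp add: complex_eq_iff)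
qed

lemma psd_sesq_norm_le:
  assumes "psd \<rho>"
  shows "cmod (sesq \<rho> u w) \<le> (Re (sesq \<rho> u u) + Re (sesq \<rho> w w)) / 2"
proof (cases "sesq \<rho> u w = 0")
  case True
  then show ?thesis
    using psd_sesq_nonneg[OF assms, of u] psd_sesq_nonneg[OF assms, of w] by simp
next
  case False
  define a where "a = sesq \<rho> u w"
  define z where "z = cnj a / cmod a"
  have "a * cnj a = of_real ((cmod a)\<^sup>2)" and "cmod a \<noteq> 0"
    using complex_norm_square[of a] False by (simp_all add: a_def)
  then have z: "cnj z * z = 1" "z * a = cmod a" "cnj z * cnj a = cmod a"
    unfolding z_def by (auto simp: field_simps power2_eq_square mult.commute)
  text \<open>Positivity on \<open>u - z w\<close>, where the phase \<open>z\<close> makes the cross terms real and negative.\<close>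
  have "sesq \<rho> (u - z *s w) (u - z *s w)
      = sesq \<rho> u u - z * a - cnj z * sesq \<rho> w u + cnj z * z * sesq \<rho> w w"
    by (simp add: sesq_diff_left sesq_diff_right sesq_scale_left sesq_scale_right a_def algebra_simps)
  also have "\<dots> = sesq \<rho> u u + sesq \<rho> w w - 2 * cmod a"
    using z psd_sesq_commute[OF assms, of w u] a_def by simp
  finally show ?thesis
    using psd_sesq_nonneg[OF assms, of "u - z *s w"] by (simp add: a_def)
qed

text \<open>\<open>frame_column X w i\<close> is the \<open>i\<close>-th column of the frame operator \<open>P = (\<Sum>x\<in>X. outer (w x))\<close>,
  and \<open>frame_compression \<rho> X w = trace (P ** \<rho> ** P)\<close>.\<close>
definition frame_column :: "'x set \<Rightarrow> ('x \<Rightarrow> complex^'d) \<Rightarrow> 'd \<Rightarrow> complex^'d" where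
  "frame_column X w i = (\<Sum>x\<in>X. cnj (w x $ i) *s w x)"

definition frame_compression :: "complex^'d^'d \<Rightarrow> 'x set \<Rightarrow> ('x \<Rightarrow> complex^'d) \<Rightarrow> complex" where
  "frame_compression \<rho> X w = (\<Sum>x\<in>X. \<Sum>y\<in>X. cinner (w y) (w x) * sesq \<rho> (w x) (w y))"

lemma
  assumes "finite X"
  shows sum_sesq_axis_frame_column:
      "(\<Sum>i\<in>UNIV. sesq \<rho> (axis i 1) (frame_column X w i)) = (\<Sum>x\<in>X. sesq \<rho> (w x) (w x))"
    and sum_sesq_frame_column_axis:
      "(\<Sum>i\<in>UNIV. sesq \<rho> (frame_column X w i) (axis i 1)) = (\<Sum>x\<in>X. sesq \<rho> (w x) (w x))"
    and sum_sesq_frame_column: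
      "(\<Sum>i\<in>UNIV. sesq \<rho> (frame_column X w i) (frame_column X w i)) = frame_compression \<rho> X w"
proof -
  show "(\<Sum>i\<in>UNIV. sesq \<rho> (axis i 1) (frame_column X w i)) = (\<Sum>x\<in>X. sesq \<rho> (w x) (w x))"
    unfolding frame_column_def using assms
    by (simp add: sesq_sum_right sesq_scale_right) (subst sum.swap, simp add: sesq_expand_left)
  show "(\<Sum>i\<in>UNIV. sesq \<rho> (frame_column X w i) (axis i 1)) = (\<Sum>x\<in>X. sesq \<rho> (w x) (w x))"
    unfolding frame_column_def using assms
    by (simp add: sesq_sum_left sesq_scale_left) (subst sum.swap, simp add: sesq_expand_right)
  have "(\<Sum>i\<in>UNIV. sesq \<rho> (frame_column X w i) (frame_column X w i))
      = (\<Sum>i\<in>UNIV. \<Sum>x\<in>X. \<Sum>y\<in>X. (w x $ i * cnj (w y $ i)) * sesq \<rho> (w x) (w y))"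
    unfolding frame_column_def using assms
    by (simp add: sesq_sum_left sesq_sum_right sesq_scale_left sesq_scale_right sum_distrib_left mult_ac)
      (rule sum.cong[OF refl], rule sum.swap)
  also have "\<dots> = (\<Sum>x\<in>X. \<Sum>i\<in>UNIV. \<Sum>y\<in>X. (w x $ i * cnj (w y $ i)) * sesq \<rho> (w x) (w y))"
    by (rule sum.swap)
  also have "\<dots> = (\<Sum>x\<in>X. \<Sum>y\<in>X. \<Sum>i\<in>UNIV. (w x $ i * cnj (w y $ i)) * sesq \<rho> (w x) (w y))"
    by (simp add: sum.swap[of _ UNIV])
  also have "\<dots> = frame_compression \<rho> X w"
    unfolding frame_compression_def cinner_def by (simp add: sum_distrib_left sum_distrib_right mult_ac)
  finally show "(\<Sum>i\<in>UNIV. sesq \<rho> (frame_column X w i) (frame_column X w i)) = frame_compression \<rho> X w" .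
qed

text \<open>This is \<open>0 \<le> Re (trace ((1 - t P) \<rho> (1 - t P)))\<close>, computed column by column.\<close>
lemma frame_compression_quadratic_nonneg:
  assumes "psd \<rho>" "finite X"
  shows "0 \<le> Re (trace \<rho>) - 2 * t * (\<Sum>x\<in>X. Re (sesq \<rho> (w x) (w x))) + t\<^sup>2 * Re (frame_compression \<rho> X w)"
proof -
  let ?v = "\<lambda>i. axis i 1 - of_real t *s frame_column X w i"
  have "(\<Sum>i\<in>UNIV. sesq \<rho> (?v i) (?v i))
      = (\<Sum>i\<in>UNIV. sesq \<rho> (axis i 1) (axis i 1) - of_real t * sesq \<rho> (axis i 1) (frame_column X w i)
          - of_real t * sesq \<rho> (frame_column X w i) (axis i 1)
          + of_real t * of_real t * sesq \<rho> (frame_column X w i) (frame_column X w i))"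
    by (simp add: sesq_diff_left sesq_diff_right sesq_scale_left sesq_scale_right algebra_simps)
  also have "\<dots> = trace \<rho> - 2 * of_real t * (\<Sum>x\<in>X. sesq \<rho> (w x) (w x))
      + of_real t * of_real t * frame_compression \<rho> X w"
    using assms(2)
    by (simp add: trace_eq_sum_sesq_axis sum.distrib sum_subtractf sum_distrib_left[symmetric]
        sum_sesq_axis_frame_column sum_sesq_frame_column_axis sum_sesq_frame_column)
  finally have "Re (\<Sum>i\<in>UNIV. sesq \<rho> (?v i) (?v i))
      = Re (trace \<rho>) - 2 * t * (\<Sum>x\<in>X. Re (sesq \<rho> (w x) (w x))) + t\<^sup>2 * Re (frame_compression \<rho> X w)"
    by (simp add: power2_eq_square)
  moreover have "0 \<le> Re (\<Sum>i\<in>UNIV. sesq \<rho> (?v i) (?v i))"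
    using psd_sesq_nonneg[OF assms(1)] by (simp add: sum_nonneg)
  ultimately show ?thesis
    by simp
qed

lemma frame_compression_le:
  assumes "psd \<rho>" "finite X" "c \<ge> 0"
    and unit: "\<And>x. x \<in> X \<Longrightarrow> cinner (w x) (w x) = 1"
    and overlap: "\<And>x y. x \<in> X \<Longrightarrow> y \<in> X \<Longrightarrow> x \<noteq> y \<Longrightarrow> cmod (cinner (w x) (w y)) \<le> c"
  shows "Re (frame_compression \<rho> X w)
    \<le> (1 + c * (real (card X) - 1)) * (\<Sum>x\<in>X. Re (sesq \<rho> (w x) (w x)))"
proof -
  define p where "p x = Re (sesq \<rho> (w x) (w x))" for x
  define S where "S = (\<Sum>x\<in>X. p x)"
  text \<open>\<open>h\<close> bounds the terms of the Gram sum: diagonal terms equal \<open>p x\<close>, off-diagonal ones are at most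
    \<open>c (p x + p y) / 2\<close> by \<open>psd_sesq_norm_le\<close>.\<close>
  define h where "h x y = c / 2 * (p x + p y) + (if x = y then (1 - c) * p x else 0)" for x y
  have term_le: "Re (cinner (w y) (w x) * sesq \<rho> (w x) (w y)) \<le> h x y" if "x \<in> X" "y \<in> X" for x y
  proof (cases "x = y")
    case True
    then show ?thesis
      using unit[OF \<open>x \<in> X\<close>] psd_sesq_real[OF assms(1), of "w x"] by (simp add: h_def p_def algebra_simps)
  next
    case False
    have "Re (cinner (w y) (w x) * sesq \<rho> (w x) (w y)) \<le> cmod (cinner (w y) (w x)) * cmod (sesq \<rho> (w x) (w y))"
      using complex_Re_le_cmod by (metis norm_mult)
    also have "\<dots> \<le> c * ((p x + p y) / 2)"
      using overlap[of y x] that False psd_sesq_norm_le[OF assms(1), of "w x" "w y"] assms(3)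
      by (intro mult_mono) (auto simp: p_def)
    finally show ?thesis
      using False by (simp add: h_def)
  qed
  have pairs: "(\<Sum>x\<in>X. \<Sum>y\<in>X. p x + p y) = 2 * real (card X) * S"
    by (simp add: sum.distrib S_def sum_distrib_left[symmetric])
  have "(\<Sum>x\<in>X. \<Sum>y\<in>X. h x y) = (\<Sum>x\<in>X. \<Sum>y\<in>X. c / 2 * (p x + p y)) + (\<Sum>x\<in>X. (1 - c) * p x)"
    using assms(2) by (simp add: h_def sum.distrib)
  also have "\<dots> = c / 2 * (\<Sum>x\<in>X. \<Sum>y\<in>X. p x + p y) + (1 - c) * S"
    by (simp only: sum_distrib_left S_def)
  also have "\<dots> = (1 + c * (real (card X) - 1)) * S"
    unfolding pairs by (simp add: algebra_simps)
  finally have "(\<Sum>x\<in>X. \<Sum>y\<in>X. h x y) = (1 + c * (real (card X) - 1)) * S" .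
  moreover have "Re (frame_compression \<rho> X w) \<le> (\<Sum>x\<in>X. \<Sum>y\<in>X. h x y)"
    unfolding frame_compression_def using term_le by (simp add: sum_mono)
  ultimately show ?thesis
    by (simp add: S_def p_def)
qed

lemma sum_sesq_le_trace:
  fixes w :: "'x \<Rightarrow> complex^'d"
  assumes "psd \<rho>" "finite X" "X \<noteq> {}" "c \<ge> 0"
    and "\<And>x. x \<in> X \<Longrightarrow> cinner (w x) (w x) = 1"
    and "\<And>x y. x \<in> X \<Longrightarrow> y \<in> X \<Longrightarrow> x \<noteq> y \<Longrightarrow> cmod (cinner (w x) (w y)) \<le> c"
  shows "(\<Sum>x\<in>X. Re (sesq \<rho> (w x) (w x))) \<le> (1 + c * (real (card X) - 1)) * Re (trace \<rho>)"
proof -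
  define S where "S = (\<Sum>x\<in>X. Re (sesq \<rho> (w x) (w x)))"
  define \<beta> where "\<beta> = 1 + c * (real (card X) - 1)"
  have "card X \<ge> 1"
    using assms(2,3) by (simp add: Suc_leI card_gt_0_iff)
  then have "\<beta> \<ge> 1"
    using assms(4) by (simp add: \<beta>_def)
  have "0 \<le> Re (trace \<rho>) - 2 * (1 / \<beta>) * S + (1 / \<beta>)\<^sup>2 * Re (frame_compression \<rho> X w)"
    unfolding S_def by (rule frame_compression_quadratic_nonneg[OF assms(1,2)])
  also have "\<dots> \<le> Re (trace \<rho>) - 2 * (1 / \<beta>) * S + (1 / \<beta>)\<^sup>2 * (\<beta> * S)"
    using frame_compression_le[of \<rho> X c w] assms by (simp add: S_def \<beta>_def mult_left_mono)
  also have "\<dots> = Re (trace \<rho>) - S / \<beta>"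
    using \<open>\<beta> \<ge> 1\<close> by (simp add: field_simps power2_eq_square)
  finally show ?thesis
    using \<open>\<beta> \<ge> 1\<close> by (simp add: S_def \<beta>_def field_simps)
qed

lemma sesq_le_trace:
  assumes "psd \<rho>" "cinner v v = 1"
  shows "Re (sesq \<rho> v v) \<le> Re (trace \<rho>)"
  using sum_sesq_le_trace[OF assms(1), of "{()}" 0 "\<lambda>_. v"] assms(2) by simp

lemma MUB_set_cinner_self: "MUB_set n \<phi> \<Longrightarrow> x \<in> {1..n} \<Longrightarrow> cinner (\<phi> x a) (\<phi> x a) = 1"
  by (simp add: MUB_set_def orthonormal_basis_def)

lemma MUB_set_cinner:
  "MUB_set n (\<phi> :: nat \<Rightarrow> 'a::finite \<Rightarrow> complex^'d) \<Longrightarrow> x \<in> {1..n} \<Longrightarrow> y \<in> {1..n} \<Longrightarrow> x \<noteq> y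
    \<Longrightarrow> cmod (cinner (\<phi> x a) (\<phi> y b)) = 1 / sqrt (real CARD('d))"
  by (simp add: MUB_set_def mutually_unbiased_def)

lemma pairing_outer:
  "pairing n (\<lambda>x a. outer (\<phi> x a)) \<sigma> = (\<Sum>x\<in>{1..n}. \<Sum>a\<in>UNIV. sesq (\<sigma> x a) (\<phi> x a) (\<phi> x a))"
  unfolding pairing_def by (simp add: trace_sum trace_outer_mult)

lemma ex_maximizer:
  fixes g :: "'a::finite \<Rightarrow> 'b::linorder"
  shows "\<exists>m. \<forall>a. g a \<le> g m"
proof -
  have "Max (range g) \<in> range g"
    by (rule Max_in) auto
  then obtain m where "g m = Max (range g)"
    by (metis rangeE)
  moreover have "g a \<le> Max (range g)" for a
    by simp
  ultimately show ?thesis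
    by metis
qed

lemma hidden_state_bound:
  fixes \<phi> :: "nat \<Rightarrow> 'a::finite \<Rightarrow> complex^'d"
  assumes "MUB_set n \<phi>" "n \<ge> 1" "psd \<rho>"
    and "\<And>x a. x \<in> {1..n} \<Longrightarrow> p x a \<ge> 0" "\<And>x. x \<in> {1..n} \<Longrightarrow> (\<Sum>a\<in>UNIV. p x a) = 1"
  shows "(\<Sum>x\<in>{1..n}. \<Sum>a\<in>UNIV. p x a * Re (sesq \<rho> (\<phi> x a) (\<phi> x a)))
    \<le> (1 + (real n - 1) / sqrt (real CARD('d))) * Re (trace \<rho>)"
proof -
  define f where "f x a = Re (sesq \<rho> (\<phi> x a) (\<phi> x a))" for x a
  obtain m where m: "\<And>x a. f x a \<le> f x (m x)"
    using ex_maximizer[of "f _"] by metis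
  have "(\<Sum>x\<in>{1..n}. \<Sum>a\<in>UNIV. p x a * f x a) \<le> (\<Sum>x\<in>{1..n}. \<Sum>a\<in>UNIV. p x a * f x (m x))"
    using assms(4) m by (intro sum_mono mult_left_mono) auto
  also have "\<dots> = (\<Sum>x\<in>{1..n}. f x (m x))"
    using assms(5) by (simp add: sum_distrib_right[symmetric])
  also have "\<dots> \<le> (1 + 1 / sqrt (real CARD('d)) * (real (card {1..n}) - 1)) * Re (trace \<rho>)"
    unfolding f_def using assms(1-3)
    by (intro sum_sesq_le_trace) (auto simp: MUB_set_cinner_self MUB_set_cinner)
  finally show ?thesis
    by (simp add: f_def)
qed

lemma LHS_pairing_le:
  fixes \<phi> :: "nat \<Rightarrow> 'a::finite \<Rightarrow> complex^'d"
  assumes "MUB_set n \<phi>" "n \<ge> 1" "has_LHS n \<sigma>"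
  shows "cmod (pairing n (\<lambda>x a. outer (\<phi> x a)) \<sigma>) \<le> 1 + (real n - 1) / sqrt (real CARD('d))"
proof -
  obtain \<Lambda> :: "nat set" and q \<rho> p where "finite \<Lambda>" and q: "\<forall>l\<in>\<Lambda>. q l \<ge> 0" "sum q \<Lambda> = 1"
    and \<rho>: "\<forall>l\<in>\<Lambda>. density (\<rho> l)"
    and p: "\<forall>l\<in>\<Lambda>. \<forall>x\<in>{1..n}. (\<forall>a. p l x a \<ge> 0) \<and> (\<Sum>a\<in>UNIV. p l x a) = 1"
    and \<sigma>: "\<forall>x\<in>{1..n}. \<forall>a. \<sigma> x a = (\<Sum>l\<in>\<Lambda>. (q l * p l x a) *\<^sub>R \<rho> l)"
    using assms(3) unfolding has_LHS_def by blast
  define \<beta> where "\<beta> = 1 + (real n - 1) / sqrt (real CARD('d))"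
  define g where "g l = (\<Sum>x\<in>{1..n}. \<Sum>a\<in>UNIV. p l x a * Re (sesq (\<rho> l) (\<phi> x a) (\<phi> x a)))" for l
  have psd: "psd (\<rho> l)" if "l \<in> \<Lambda>" for l
    using \<rho> that by (simp add: density_def)
  have "pairing n (\<lambda>x a. outer (\<phi> x a)) \<sigma>
      = (\<Sum>x\<in>{1..n}. \<Sum>a\<in>UNIV. \<Sum>l\<in>\<Lambda>. of_real (q l * p l x a * Re (sesq (\<rho> l) (\<phi> x a) (\<phi> x a))))"
    unfolding pairing_outer using \<sigma> \<open>finite \<Lambda>\<close> psd_sesq_real[OF psd]
    by (intro sum.cong refl) (simp add: sesq_matrix_sum sesq_matrix_scaleR)
  also have "\<dots> = of_real (\<Sum>l\<in>\<Lambda>. q l * g l)"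
    unfolding g_def of_real_sum
    by (simp add: sum_distrib_left mult.assoc sum.swap[of _ \<Lambda>] sum.swap[of _ "{1..n}"])
  finally have "cmod (pairing n (\<lambda>x a. outer (\<phi> x a)) \<sigma>) = \<bar>\<Sum>l\<in>\<Lambda>. q l * g l\<bar>"
    by (simp only: norm_of_real)
  moreover have "0 \<le> g l" "g l \<le> \<beta>" if "l \<in> \<Lambda>" for l
    using hidden_state_bound[OF assms(1,2) psd[OF that], of "p l"] p that psd_sesq_nonneg[OF psd[OF that]] \<rho>
    by (auto simp: g_def \<beta>_def density_def intro!: sum_nonneg)
  then have "0 \<le> (\<Sum>l\<in>\<Lambda>. q l * g l)" "(\<Sum>l\<in>\<Lambda>. q l * g l) \<le> (\<Sum>l\<in>\<Lambda>. q l * \<beta>)"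
    using q by (auto intro!: sum_nonneg sum_mono mult_left_mono)
  ultimately show ?thesis
    using q by (simp add: \<beta>_def sum_distrib_right[symmetric])
qed

lemma quantum_pairing_le:
  fixes \<phi> :: "nat \<Rightarrow> 'a::finite \<Rightarrow> complex^'d"
  assumes "MUB_set n \<phi>" "assemblage n \<sigma>"
  shows "cmod (pairing n (\<lambda>x a. outer (\<phi> x a)) \<sigma>) \<le> real n"
proof -
  have psd: "psd (\<sigma> x a)" if "x \<in> {1..n}" for x a
    using assms(2) that unfolding assemblage_def by blast
  have "cmod (pairing n (\<lambda>x a. outer (\<phi> x a)) \<sigma>)
      \<le> (\<Sum>x\<in>{1..n}. \<Sum>a\<in>UNIV. cmod (sesq (\<sigma> x a) (\<phi> x a) (\<phi> x a)))"
    unfolding pairing_outer by (rule order_trans[OF norm_sum sum_mono]) (rule norm_sum)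
  also have "\<dots> \<le> (\<Sum>x\<in>{1..n}. \<Sum>a\<in>UNIV. Re (trace (\<sigma> x a)))"
  proof (intro sum_mono)
    fix x a
    assume "x \<in> {1..n}"
    then have "cmod (sesq (\<sigma> x a) (\<phi> x a) (\<phi> x a)) = Re (sesq (\<sigma> x a) (\<phi> x a) (\<phi> x a))"
      using psd[of x a] by (simp add: cmod_eq_Re psd_iff_sesq)
    also have "\<dots> \<le> Re (trace (\<sigma> x a))"
      using \<open>x \<in> {1..n}\<close> psd by (simp add: sesq_le_trace MUB_set_cinner_self[OF assms(1)])
    finally show "cmod (sesq (\<sigma> x a) (\<phi> x a) (\<phi> x a)) \<le> Re (trace (\<sigma> x a))" .
  qed
  also have "\<dots> = (\<Sum>x\<in>{1..n}. 1)"
  proof (intro sum.cong refl)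
    fix x
    assume "x \<in> {1..n}"
    then have "trace (\<Sum>a\<in>UNIV. \<sigma> x a) = 1"
      using assms(2) unfolding assemblage_def by blast
    then show "(\<Sum>a\<in>UNIV. Re (trace (\<sigma> x a))) = 1"
      by (simp add: trace_sum flip: Re_sum)
  qed
  finally show ?thesis
    by simp
qed

lemma quantum_pairing_attained:
  fixes \<phi> :: "nat \<Rightarrow> 'd::finite \<Rightarrow> complex^'d"
  assumes "MUB_set n \<phi>"
  shows "\<exists>\<sigma>. assemblage n \<sigma> \<and> pairing n (\<lambda>x a. outer (\<phi> x a)) \<sigma> = of_real (real n)"
proof -
  define d where "d = real CARD('d)"
  define \<sigma> where "\<sigma> x a = (1 / d) *\<^sub>R outer (\<phi> x a)" for x a
  have d: "d > 0"
    by (simp add: d_def)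
  have marginal: "(\<Sum>a\<in>UNIV. \<sigma> x a) = (1 / d) *\<^sub>R mat 1" if "x \<in> {1..n}" for x
  proof -
    have "orthonormal_basis (\<phi> x)"
      using assms that by (simp add: MUB_set_def)
    then show ?thesis
      by (simp add: \<sigma>_def scaleR_sum_right[symmetric] sum_outer_orthonormal_basis)
  qed
  have "assemblage n \<sigma>"
    using marginal d
    by (auto simp: assemblage_def \<sigma>_def psd_scaleR psd_outer trace_def mat_def d_def
        scaleR_conv_of_real[where 'a=complex])
  moreover have "pairing n (\<lambda>x a. outer (\<phi> x a)) \<sigma> = (\<Sum>x\<in>{1..n}. \<Sum>a::'d\<in>UNIV. of_real (1 / d))"
    unfolding pairing_outer \<sigma>_def using MUB_set_cinner_self[OF assms]
    by (intro sum.cong refl) (simp add: sesq_matrix_scaleR sesq_outer)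
  ultimately show ?thesis
    using d by (auto simp: d_def)
qed

text \<open>The maximally mixed state with uniformly random outcomes has an LHS model and a positive pairing.\<close>
lemma LHS_pairing_attained:
  fixes \<phi> :: "nat \<Rightarrow> 'd::finite \<Rightarrow> complex^'d"
  assumes "MUB_set n \<phi>"
  shows "\<exists>\<sigma>. has_LHS n \<sigma> \<and> pairing n (\<lambda>x a. outer (\<phi> x a)) \<sigma> = of_real (real n / real CARD('d))"
proof -
  define d where "d = real CARD('d)"
  define \<rho> :: "complex^'d^'d" where "\<rho> = (1 / d) *\<^sub>R mat 1"
  define \<sigma> where "\<sigma> x a = (1 / d) *\<^sub>R \<rho>" for x :: nat and a :: 'd
  have d: "d > 0"
    by (simp add: d_def)
  have "density \<rho>"
    using d psd_scaleR[OF psd_mat_1, of "1 / d"]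
    by (simp add: density_def \<rho>_def trace_def mat_def d_def scaleR_conv_of_real[where 'a=complex])
  then have "has_LHS n \<sigma>"
    unfolding has_LHS_def using d
    by (intro exI[of _ "{0}"] exI[of _ "\<lambda>_. 1"] exI[of _ "\<lambda>_. \<rho>"] exI[of _ "\<lambda>_ _ _. 1 / d"])
      (simp add: \<sigma>_def d_def)
  moreover have "pairing n (\<lambda>x a. outer (\<phi> x a)) \<sigma> = (\<Sum>x\<in>{1..n}. \<Sum>a::'d\<in>UNIV. of_real (1 / d * (1 / d)))"
    unfolding pairing_outer \<sigma>_def \<rho>_def using MUB_set_cinner_self[OF assms]
    by (intro sum.cong refl) (simp add: sesq_matrix_scaleR sesq_mat_1)
  ultimately show ?thesis
    using d by (auto simp: d_def)
qed

lemma S_Q_ge: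
  fixes \<phi> :: "nat \<Rightarrow> 'd::finite \<Rightarrow> complex^'d"
  assumes "MUB_set n \<phi>"
  shows "real n \<le> S_Q n (\<lambda>x a. outer (\<phi> x a))"
proof -
  obtain \<sigma> where "assemblage n \<sigma>" "pairing n (\<lambda>x a. outer (\<phi> x a)) \<sigma> = of_real (real n)"
    using quantum_pairing_attained[OF assms] by blast
  then show ?thesis
    unfolding S_Q_def using quantum_pairing_le[OF assms]
    by (intro cSup_upper) (auto simp: bdd_above_def intro!: exI[of _ \<sigma>])
qed

lemma S_LHS_le:
  fixes \<phi> :: "nat \<Rightarrow> 'd::finite \<Rightarrow> complex^'d"
  assumes "MUB_set n \<phi>" "n \<ge> 1"
  shows "S_LHS n (\<lambda>x a. outer (\<phi> x a)) \<le> 1 + (real n - 1) / sqrt (real CARD('d))"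
  unfolding S_LHS_def using LHS_pairing_attained[OF assms(1)] LHS_pairing_le[OF assms]
  by (intro cSup_least) auto

lemma S_LHS_pos:
  fixes \<phi> :: "nat \<Rightarrow> 'd::finite \<Rightarrow> complex^'d"
  assumes "MUB_set n \<phi>" "n \<ge> 1"
  shows "0 < S_LHS n (\<lambda>x a. outer (\<phi> x a))"
proof -
  obtain \<sigma> where \<sigma>: "has_LHS n \<sigma>"
    and pairing: "pairing n (\<lambda>x a. outer (\<phi> x a)) \<sigma> = of_real (real n / real CARD('d))"
    using LHS_pairing_attained[OF assms(1)] by blast
  have "0 < cmod (pairing n (\<lambda>x a. outer (\<phi> x a)) \<sigma>)"
    using assms(2) by (simp add: pairing)
  also have "\<dots> \<le> S_LHS n (\<lambda>x a. outer (\<phi> x a))"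
    unfolding S_LHS_def using \<sigma> LHS_pairing_le[OF assms]
    by (intro cSup_upper) (auto simp: bdd_above_def)
  finally show ?thesis .
qed

theorem theorem1:
  fixes n :: nat and \<phi> :: "nat \<Rightarrow> 'd::finite \<Rightarrow> complex^'d"
  assumes "CARD('d) \<ge> 2" and "n \<ge> 1" and "MUB_set n \<phi>"
  shows "violation n (\<lambda>x a. outer (\<phi> x a)) \<ge>
           real n * sqrt (real CARD('d)) / (real n + 1 + sqrt (real CARD('d)))"
proof -
  let ?F = "\<lambda>x a. outer (\<phi> x a)" and ?s = "sqrt (real CARD('d))"
  have "?s > 0" "real n \<ge> 1"
    using assms(2) by simp_all
  then have s: "?s > 0" "?s + real n - 1 > 0"
    by linarith+
  have "real n * ?s / (real n + 1 + ?s) \<le> real n * ?s / (?s + real n - 1)"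
    using s by (intro divide_left_mono) auto
  also have "\<dots> = real n / (1 + (real n - 1) / ?s)"
    using s by (simp add: field_simps)
  also have "\<dots> \<le> real n / S_LHS n ?F"
    using S_LHS_le[OF assms(3,2)] S_LHS_pos[OF assms(3,2)] by (intro divide_left_mono) auto
  also have "\<dots> \<le> S_Q n ?F / S_LHS n ?F"
    using S_Q_ge[OF assms(3)] S_LHS_pos[OF assms(3,2)] by (intro divide_right_mono) auto
  finally show ?thesis
    unfolding violation_def .
qed

end
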